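(* Let $r\ge-1$ be an integer and $m\ge1$. Let $\beta_r(m,q)=\sum q^{|\pi|}$, summed over all partitions $\pi$ with $n$ copies of $n$ having exactly $m$ parts, whose lexicographically smallest part is of the form $i_i$ for some $i\ge1$, and such that, with parts listed in ascending lexicographic order, the weighted difference of each part and the preceding one is exactly $r$. Then $$\beta_r(m,q)=\frac{q^{m^2+r\binom m2}}{(q;q^2)_m}.$$
   Context: $M=\{m_i: 1\le i\le m\}$; a partition with $n$ copies of $n$ is a finite multiset of elements of $M$, and $|\pi|$ is the sum of the values (first entries) of its parts. Lexicographic order: $m_i>n_j$ iff $m>n$, or $m=n$ and $i>j$. Weighted difference $((m_i-n_j))=m-n-i-j$; "successive weighted difference" of consecutive parts $n_j\le m_i$ in ascending order means $((m_i-n_j))$. $(a;q)_m=\prod_{j=0}^{m-1}(1-aq^j)$. *)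

theory Defs
  imports "HOL-Computational_Algebra.Formal_Power_Series" "HOL-Library.Multiset"
    "HOL-Library.Product_Lexorder"
begin

text \<open>A part m_i (with 1 <= i <= m) is represented as the pair (m, i).
  The lexicographic order of the paper is the lexicographic order on pairs
  (Product_Lexorder). A partition with n copies of n is a finite multiset of parts.\<close>

definition valid_part :: "nat \<times> nat \<Rightarrow> bool" where
  "valid_part p \<longleftrightarrow> 1 \<le> snd p \<and> snd p \<le> fst p"

definition nc_partition :: "(nat \<times> nat) multiset \<Rightarrow> bool" where
  "nc_partition \<pi> \<longleftrightarrow> (\<forall>p \<in># \<pi>. valid_part p)"

definition weight :: "(nat \<times> nat) multiset \<Rightarrow> nat" where
  "weight \<pi> = (\<Sum>p \<in># \<pi>. fst p)"

definition wdiff :: "nat \<times> nat \<Rightarrow> nat \<times> nat \<Rightarrow> int" where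
  "wdiff p p' = int (fst p) - int (fst p') - int (snd p) - int (snd p')"

definition beta_set :: "int \<Rightarrow> nat \<Rightarrow> nat \<Rightarrow> (nat \<times> nat) multiset set" where
  "beta_set r m N = {\<pi>. nc_partition \<pi> \<and> size \<pi> = m
      \<and> (\<exists>i\<ge>1. Min_mset \<pi> = (i, i))
      \<and> (let xs = sorted_list_of_multiset \<pi> in
           \<forall>k. k + 1 < length xs \<longrightarrow> wdiff (xs ! (k+1)) (xs ! k) = r)
      \<and> weight \<pi> = N}"

definition beta_fps :: "int \<Rightarrow> nat \<Rightarrow> rat fps" where
  "beta_fps r m = Abs_fps (\<lambda>N. of_nat (card (beta_set r m N)))"

end

theory Submission
  imports Defs
begin

text \<open>Listed in ascending order, an admissible partition is determined by its subscripts
  \<open>j\<^sub>1, \<dots>, j\<^sub>m \<ge> 1\<close>: the smallest part has value \<open>j\<^sub>1\<close>, and the weighted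
  difference \<open>r\<close> forces the value of the \<open>(k+1)\<close>-st part to be \<open>n\<^sub>k + j\<^sub>k + j\<^sub>k\<^sub>+\<^sub>1 + r\<close>.
  Summing, the weight is \<open>\<Sum>\<^sub>k (2(m-k)+1) j\<^sub>k + r C(m,2)\<close>.  With \<open>j\<^sub>k = c\<^sub>k + 1\<close>, the
  partitions of weight \<open>N\<close> thus correspond to the solutions \<open>c \<in> \<nat>\<^sup>m\<close> of
  \<open>\<Sum>\<^sub>k (2(m-k)+1) c\<^sub>k = N - m\<^sup>2 - r C(m,2)\<close>, whose generating function is
  \<open>1 / ((1-q)(1-q\<^sup>3)\<cdots>(1-q\<^sup>2\<^sup>m\<^sup>-\<^sup>1))\<close>.\<close>

fun lin_comb :: "nat list \<Rightarrow> nat list \<Rightarrow> nat" where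
  "lin_comb (w # ws) (c # cs) = w * c + lin_comb ws cs"
| "lin_comb _ _ = 0"

definition solutions :: "nat list \<Rightarrow> nat \<Rightarrow> nat list set" where
  "solutions ws n = {cs. length cs = length ws \<and> lin_comb ws cs = n}"

definition solutions_fps :: "nat list \<Rightarrow> 'a::comm_ring_1 fps" where
  "solutions_fps ws = Abs_fps (\<lambda>n. of_nat (card (solutions ws n)))"

lemma member_le_lin_comb:
  "\<forall>w\<in>set ws. w > 0 \<Longrightarrow> length cs = length ws \<Longrightarrow> c \<in> set cs \<Longrightarrow> c \<le> lin_comb ws cs"
  by (induction ws cs rule: lin_comb.induct) (auto intro: trans_le_add1 trans_le_add2)

lemma finite_solutions:
  assumes "\<forall>w\<in>set ws. w > 0"
  shows "finite (solutions ws n)"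
proof (rule finite_subset)
  show "solutions ws n \<subseteq> {cs. set cs \<subseteq> {0..n} \<and> length cs = length ws}"
    using member_le_lin_comb[OF assms] unfolding solutions_def by fastforce
  show "finite {cs. set cs \<subseteq> {0..n} \<and> length cs = length ws}"
    by (rule finite_lists_length_eq) simp
qed

text \<open>Solutions with \<open>c\<^sub>1 = 0\<close> versus \<open>c\<^sub>1 \<ge> 1\<close>; on generating functions this reads
  \<open>G(w # ws) = G ws + X\<^sup>w G(w # ws)\<close>.\<close>

lemma solutions_Cons:
  "solutions (w # ws) n = Cons 0 ` solutions ws n \<union>
     (if w \<le> n then (\<lambda>cs. Suc (hd cs) # tl cs) ` solutions (w # ws) (n - w) else {})"
  (is "?lhs = ?zero \<union> ?pos")
proof (intro equalityI subsetI)
  fix cs assume "cs \<in> ?lhs"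
  then obtain c ds where cs: "cs = c # ds" "length ds = length ws" "w * c + lin_comb ws ds = n"
    unfolding solutions_def by (cases cs) auto
  show "cs \<in> ?zero \<union> ?pos"
  proof (cases c)
    case 0
    then show ?thesis using cs unfolding solutions_def by auto
  next
    case (Suc c')
    then have "w \<le> n" "c' # ds \<in> solutions (w # ws) (n - w)"
      using cs unfolding solutions_def by auto
    then show ?thesis using cs Suc by (auto intro!: image_eqI[where x = "c' # ds"])
  qed
next
  fix cs assume "cs \<in> ?zero \<union> ?pos"
  then show "cs \<in> ?lhs"
    by (auto simp: solutions_def length_Suc_conv split: if_splits)
qed

lemma card_solutions_Cons:
  assumes "\<forall>x\<in>set (w # ws). x > 0"
  shows "card (solutions (w # ws) n) =
    card (solutions ws n) + (if w \<le> n then card (solutions (w # ws) (n - w)) else 0)"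
proof -
  let ?inc = "\<lambda>cs. Suc (hd cs) # tl cs"
  have fin: "finite (solutions ws n)" "finite (solutions (w # ws) (n - w))"
    using assms finite_solutions by auto
  have "inj_on ?inc (solutions (w # ws) (n - w))"
    by (rule inj_onI) (auto simp: solutions_def neq_Nil_conv length_Suc_conv)
  moreover have "Cons 0 ` solutions ws n \<inter> ?inc ` solutions (w # ws) (n - w) = {}"
    by auto
  ultimately show ?thesis
    unfolding solutions_Cons[of w ws n]
    by (simp add: card_Un_disjoint fin card_image)
qed

lemma solutions_fps_Cons:
  assumes "\<forall>x\<in>set (w # ws). x > 0"
  shows "solutions_fps (w # ws) * (1 - fps_X ^ w) = solutions_fps ws"
proof (rule fps_ext)
  fix n
  have "fps_nth (solutions_fps (w # ws) * (1 - fps_X ^ w)) n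
      = fps_nth (solutions_fps (w # ws)) n - fps_nth (fps_X ^ w * solutions_fps (w # ws)) n"
    by (simp add: algebra_simps)
  also have "\<dots> = fps_nth (solutions_fps ws :: 'a fps) n"
    unfolding fps_X_power_mult_nth solutions_fps_def
    using card_solutions_Cons[OF assms, of n] by auto
  finally show "fps_nth (solutions_fps (w # ws) * (1 - fps_X ^ w)) n
      = fps_nth (solutions_fps ws :: 'a fps) n" .
qed

lemma solutions_fps_Nil: "solutions_fps [] = 1"
proof (rule fps_ext)
  fix n
  have "solutions [] n = (if n = 0 then {[]} else {})"
    unfolding solutions_def by auto
  then show "fps_nth (solutions_fps []) n = fps_nth (1 :: 'a fps) n"
    unfolding solutions_fps_def by simp
qed

lemma solutions_fps_mult_prod:
  "\<forall>w\<in>set ws. w > 0 \<Longrightarrow>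
    solutions_fps ws * (\<Prod>w\<leftarrow>ws. 1 - fps_X ^ w) = (1 :: 'a::comm_ring_1 fps)"
proof (induction ws)
  case Nil
  then show ?case by (simp add: solutions_fps_Nil)
next
  case (Cons w ws)
  have "solutions_fps (w # ws) * (\<Prod>v\<leftarrow>w # ws. 1 - fps_X ^ v)
      = solutions_fps (w # ws) * (1 - fps_X ^ w) * (\<Prod>v\<leftarrow>ws. 1 - (fps_X :: 'a fps) ^ v)"
    by (simp add: mult.assoc)
  also have "\<dots> = 1"
    using Cons by (simp add: solutions_fps_Cons)
  finally show ?case .
qed

fun odd_weights :: "nat \<Rightarrow> nat list" where
  "odd_weights 0 = []"
| "odd_weights (Suc m) = (2 * m + 1) # odd_weights m"

lemma length_odd_weights [simp]: "length (odd_weights m) = m"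
  by (induction m) auto

lemma odd_weights_pos: "\<forall>w\<in>set (odd_weights m). w > 0"
  by (induction m) auto

lemma sum_list_odd_weights: "sum_list (odd_weights m) = m\<^sup>2"
  by (induction m) (auto simp: power2_eq_square)

lemma prod_odd_weights:
  "(\<Prod>j<m. 1 - fps_X * (fps_X ^ 2) ^ j) = (\<Prod>w\<leftarrow>odd_weights m. 1 - (fps_X :: 'a::comm_ring_1 fps) ^ w)"
proof (induction m)
  case (Suc m)
  have "fps_X * (fps_X ^ 2) ^ m = (fps_X ^ (2 * m + 1) :: 'a fps)"
    by (simp add: power_mult[symmetric] power_add mult.commute)
  then show ?case using Suc by (simp add: mult.commute)
qed simp

lemma lin_comb_map_Suc:
  "length cs = length ws \<Longrightarrow> lin_comb ws (map Suc cs) = lin_comb ws cs + sum_list ws"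
  by (induction ws cs rule: lin_comb.induct) auto

text \<open>The part with subscript \<open>j\<close> at weighted difference \<open>r\<close> above \<open>p\<close>; the truncation
  by \<open>nat\<close> never applies when \<open>r \<ge> -1\<close> and \<open>p\<close> is a valid part.\<close>
definition next_part :: "int \<Rightarrow> nat \<times> nat \<Rightarrow> nat \<Rightarrow> nat \<times> nat" where
  "next_part r p j = (nat (int (fst p) + int (snd p) + int j + r), j)"

fun chain_parts :: "int \<Rightarrow> nat \<times> nat \<Rightarrow> nat list \<Rightarrow> (nat \<times> nat) list" where
  "chain_parts r p [] = []"
| "chain_parts r p (j # js) = next_part r p j # chain_parts r (next_part r p j) js"

fun parts_of_subscripts :: "int \<Rightarrow> nat list \<Rightarrow> (nat \<times> nat) list" where
  "parts_of_subscripts r [] = []"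
| "parts_of_subscripts r (i # js) = (i, i) # chain_parts r (i, i) js"

lemma fst_next_part:
  "r \<ge> -1 \<Longrightarrow> valid_part p \<Longrightarrow> int (fst (next_part r p j)) = int (fst p) + int (snd p) + int j + r"
  by (simp add: next_part_def valid_part_def)

lemma next_part_props:
  assumes "r \<ge> -1" "valid_part p" "j > 0"
  shows "valid_part (next_part r p j)" "fst p < fst (next_part r p j)"
    "wdiff (next_part r p j) p = r"
  using fst_next_part[OF assms(1,2), of j] assms
  by (auto simp: next_part_def valid_part_def wdiff_def)

lemma next_part_unique: "wdiff q p = r \<Longrightarrow> q = next_part r p (snd q)"
  by (cases q) (auto simp: next_part_def wdiff_def)

lemma map_snd_chain_parts [simp]: "map snd (chain_parts r p js) = js"
  by (induction js arbitrary: p) (auto simp: next_part_def)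

lemma map_snd_parts_of_subscripts [simp]: "map snd (parts_of_subscripts r js) = js"
  by (cases js) auto

lemma chain_parts_props:
  assumes "r \<ge> -1" "valid_part p" "\<forall>j\<in>set js. j > 0"
  shows "successively (\<lambda>p q. fst p < fst q \<and> wdiff q p = r) (p # chain_parts r p js)
    \<and> (\<forall>q\<in>set (chain_parts r p js). valid_part q)"
  using assms(2,3)
proof (induction js arbitrary: p)
  case (Cons j js)
  then have "valid_part (next_part r p j)" "fst p < fst (next_part r p j)"
    "wdiff (next_part r p j) p = r"
    using next_part_props[OF assms(1)] by auto
  with Cons.IH[of "next_part r p j"] Cons.prems show ?case
    by simp
qed simp

lemma parts_of_subscripts_props:
  assumes "r \<ge> -1" "\<forall>j\<in>set js. j > 0"
  shows "sorted (parts_of_subscripts r js)"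
    "\<forall>p\<in>set (parts_of_subscripts r js). valid_part p"
    "successively (\<lambda>p q. wdiff q p = r) (parts_of_subscripts r js)"
proof -
  have chain: "successively (\<lambda>p q. fst p < fst q \<and> wdiff q p = r) (parts_of_subscripts r js)
      \<and> (\<forall>q\<in>set (parts_of_subscripts r js). valid_part q)"
  proof (cases js)
    case (Cons i js')
    then have "valid_part (i, i)"
      using assms(2) by (simp add: valid_part_def)
    then show ?thesis
      using chain_parts_props[OF assms(1), of "(i, i)" js'] assms(2) Cons by simp
  qed simp
  have "successively (\<le>) (parts_of_subscripts r js)"
    using chain by (rule conjE) (erule successively_mono, simp add: less_eq_prod_def)
  then show "sorted (parts_of_subscripts r js)"
    by (simp add: successively_conv_sorted_wrt)
  show "\<forall>p\<in>set (parts_of_subscripts r js). valid_part p"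
    using chain by blast
  show "successively (\<lambda>p q. wdiff q p = r) (parts_of_subscripts r js)"
    using chain by (rule conjE) (erule successively_mono, simp)
qed

lemma sum_chain_parts:
  assumes "r \<ge> -1" "valid_part p" "\<forall>j\<in>set js. j > 0"
  shows "int (sum_list (map fst (chain_parts r p js)))
    = int (length js) * (int (fst p) + int (snd p)) + int (lin_comb (odd_weights (length js)) js)
      + r * int (Suc (length js) choose 2)"
  using assms(2,3)
proof (induction js arbitrary: p)
  case (Cons j js)
  let ?q = "next_part r p j"
  have q: "valid_part ?q" "int (fst ?q) = int (fst p) + int (snd p) + int j + r" "snd ?q = j"
    using Cons.prems next_part_props[OF assms(1)] fst_next_part[OF assms(1)]
    by (auto simp: next_part_def)
  have "Suc (Suc (length js)) choose 2 = (Suc (length js) choose 2) + Suc (length js)"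
    by (simp add: numeral_2_eq_2)
  then show ?case
    using Cons.IH[OF q(1)] Cons.prems q(2,3) by (simp add: algebra_simps)
qed simp

lemma sum_parts_of_subscripts:
  assumes "r \<ge> -1" "\<forall>j\<in>set js. j > 0"
  shows "int (sum_list (map fst (parts_of_subscripts r js)))
    = int (lin_comb (odd_weights (length js)) js) + r * int (length js choose 2)"
proof (cases js)
  case (Cons i js')
  have "valid_part (i, i)"
    using assms(2) Cons by (simp add: valid_part_def)
  then show ?thesis
    using sum_chain_parts[OF assms(1), of "(i, i)" js'] assms(2) Cons by (simp add: algebra_simps)
qed simp

lemma chain_parts_unique:
  "successively (\<lambda>p q. wdiff q p = r) (p # qs) \<Longrightarrow> qs = chain_parts r p (map snd qs)"
proof (induction qs arbitrary: p)
  case (Cons q qs)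
  then show ?case
    using next_part_unique[of q p r] by simp
qed simp

lemma sorted_list_of_multiset_parts_of_subscripts:
  "r \<ge> -1 \<Longrightarrow> \<forall>j\<in>set js. j > 0
    \<Longrightarrow> sorted_list_of_multiset (mset (parts_of_subscripts r js)) = parts_of_subscripts r js"
  by (simp add: parts_of_subscripts_props sorted_sort_id)

lemma weight_mset: "weight (mset xs) = sum_list (map fst xs)"
  unfolding weight_def by (simp add: sum_mset_sum_list flip: mset_map)

lemma weight_parts_of_subscripts_Suc:
  assumes "r \<ge> -1"
  shows "int (weight (mset (parts_of_subscripts r (map Suc cs))))
    = int (lin_comb (odd_weights (length cs)) cs) + int ((length cs)\<^sup>2) + r * int (length cs choose 2)"
  using sum_parts_of_subscripts[OF assms, of "map Suc cs"]
  by (simp add: weight_mset lin_comb_map_Suc sum_list_odd_weights)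

lemma Min_set_sorted: "sorted xs \<Longrightarrow> xs \<noteq> [] \<Longrightarrow> Min (set xs) = hd xs"
  by (cases xs) (auto intro!: Min_eqI)

lemma beta_set_eq_image:
  assumes "r \<ge> -1" "m \<ge> 1"
  shows "beta_set r m N = (\<lambda>cs. mset (parts_of_subscripts r (map Suc cs))) `
    {cs. length cs = m \<and> int (lin_comb (odd_weights m) cs) + int (m\<^sup>2) + r * int (m choose 2) = int N}"
  (is "_ = ?f ` ?A")
proof (intro equalityI subsetI)
  fix \<pi> assume "\<pi> \<in> beta_set r m N"
  then have \<pi>: "nc_partition \<pi>" "size \<pi> = m" "weight \<pi> = N"
    and Min: "\<exists>i\<ge>1. Min_mset \<pi> = (i, i)"
    and wd: "successively (\<lambda>p q. wdiff q p = r) (sorted_list_of_multiset \<pi>)"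
    unfolding beta_set_def Let_def successively_conv_nth by auto
  define xs where "xs = sorted_list_of_multiset \<pi>"
  obtain i where "Min_mset \<pi> = (i, i)"
    using Min by blast
  moreover have "length xs = m"
    using \<pi>(2) unfolding xs_def by (metis mset_sorted_list_of_multiset size_mset)
  moreover have "set xs = set_mset \<pi>"
    unfolding xs_def by simp
  moreover have "sorted xs"
    unfolding xs_def by simp
  moreover have "xs \<noteq> []"
    using \<open>length xs = m\<close> assms(2) by auto
  ultimately have "hd xs = (i, i)"
    using Min_set_sorted[of xs] by simp
  then obtain rest where xs: "xs = (i, i) # rest"
    using \<open>xs \<noteq> []\<close> by (cases xs) auto
  have pos: "\<forall>j\<in>set (map snd xs). j > 0"
    using \<pi>(1) \<open>set xs = set_mset \<pi>\<close> unfolding nc_partition_def valid_part_def by auto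
  define cs where "cs = map (\<lambda>j. j - 1) (map snd xs)"
  have "map Suc cs = map snd xs"
    using pos unfolding cs_def by (induction xs) auto
  moreover have "xs = parts_of_subscripts r (map snd xs)"
    using chain_parts_unique[of r "(i, i)" rest] wd xs unfolding xs_def by simp
  ultimately have "\<pi> = ?f cs"
    unfolding xs_def by (metis mset_sorted_list_of_multiset)
  moreover have "length cs = m"
    using \<open>length xs = m\<close> unfolding cs_def by simp
  ultimately show "\<pi> \<in> ?f ` ?A"
    using weight_parts_of_subscripts_Suc[OF assms(1), of cs] \<pi>(3) by auto
next
  fix \<pi> assume "\<pi> \<in> ?f ` ?A"
  then obtain cs where \<pi>: "\<pi> = ?f cs" and cs: "cs \<in> ?A"
    by blast
  then obtain c cs' where "cs = c # cs'"
    using assms(2) by (cases cs) auto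
  have pos: "\<forall>j\<in>set (map Suc cs). j > 0"
    by simp
  note props = parts_of_subscripts_props[OF assms(1) pos]
  have "length (parts_of_subscripts r (map Suc cs)) = m"
    using cs by (metis (mono_tags) length_map map_snd_parts_of_subscripts mem_Collect_eq)
  moreover have "Min_mset \<pi> = (Suc c, Suc c)"
    using Min_set_sorted[OF props(1)] \<pi> \<open>cs = c # cs'\<close> by simp
  moreover have "weight \<pi> = N"
    using weight_parts_of_subscripts_Suc[OF assms(1), of cs] cs \<pi> by simp
  ultimately show "\<pi> \<in> beta_set r m N"
    using props \<pi> sorted_list_of_multiset_parts_of_subscripts[OF assms(1) pos]
      successively_nth[OF props(3)]
    unfolding beta_set_def Let_def nc_partition_def by auto
qed

lemma inj_parts_of_subscripts_Suc:
  assumes "r \<ge> -1"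
  shows "inj (\<lambda>cs. mset (parts_of_subscripts r (map Suc cs)))"
proof (rule injI)
  fix cs ds assume "mset (parts_of_subscripts r (map Suc cs)) = mset (parts_of_subscripts r (map Suc ds))"
  then have "parts_of_subscripts r (map Suc cs) = parts_of_subscripts r (map Suc ds)"
    using sorted_list_of_multiset_parts_of_subscripts[OF assms, of "map Suc cs"]
      sorted_list_of_multiset_parts_of_subscripts[OF assms, of "map Suc ds"] by simp
  then have "map Suc cs = map Suc ds"
    by (metis map_snd_parts_of_subscripts)
  then show "cs = ds"
    by simp
qed

lemma beta_fps_eq:
  assumes "r \<ge> -1" "m \<ge> 1" "int e = int (m\<^sup>2) + r * int (m choose 2)"
  shows "beta_fps r m = fps_X ^ e * solutions_fps (odd_weights m)"
proof (rule fps_ext)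
  fix N
  have weight_eq: "int (lin_comb (odd_weights m) cs) + int (m\<^sup>2) + r * int (m choose 2) = int N
      \<longleftrightarrow> lin_comb (odd_weights m) cs + e = N" for cs
    using assms(3) by linarith
  have "{cs. length cs = m \<and> int (lin_comb (odd_weights m) cs) + int (m\<^sup>2) + r * int (m choose 2) = int N}
      = (if e \<le> N then solutions (odd_weights m) (N - e) else {})"
    unfolding weight_eq solutions_def by auto
  then have "card (beta_set r m N) = (if e \<le> N then card (solutions (odd_weights m) (N - e)) else 0)"
    unfolding beta_set_eq_image[OF assms(1,2)]
    by (simp add: card_image inj_on_subset[OF inj_parts_of_subscripts_Suc[OF assms(1)]])
  then show "fps_nth (beta_fps r m) N = fps_nth (fps_X ^ e * solutions_fps (odd_weights m)) N"
    unfolding fps_X_power_mult_nth beta_fps_def solutions_fps_def by simp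
qed

theorem theorem20:
  fixes r :: int and m :: nat
  assumes "r \<ge> -1" and "m \<ge> 1"
  shows "beta_fps r m =
    fps_X ^ nat (int (m^2) + r * int (m choose 2)) /
      (\<Prod>j<m. 1 - fps_X * (fps_X ^ 2) ^ j)"
proof -
  have "m choose 2 \<le> m\<^sup>2"
    by (metis binomial_eq_0 binomial_le_pow not_le zero_le)
  moreover have "- int (m choose 2) \<le> r * int (m choose 2)"
    using mult_right_mono[OF assms(1), of "int (m choose 2)"] by simp
  ultimately have exponent:
    "int (nat (int (m\<^sup>2) + r * int (m choose 2))) = int (m\<^sup>2) + r * int (m choose 2)"
    by linarith
  let ?X = "fps_X ^ nat (int (m\<^sup>2) + r * int (m choose 2)) :: rat fps"
  let ?G = "solutions_fps (odd_weights m) :: rat fps"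
  let ?P = "\<Prod>w\<leftarrow>odd_weights m. 1 - fps_X ^ w :: rat fps"
  have inverse: "?G * ?P = 1"
    using solutions_fps_mult_prod odd_weights_pos by blast
  then have "?P \<noteq> 0"
    by auto
  have "?X / ?P = ?X * ?G * ?P / ?P"
    by (simp add: mult.assoc inverse)
  also have "\<dots> = ?X * ?G"
    using \<open>?P \<noteq> 0\<close> by (rule nonzero_mult_div_cancel_right)
  finally show ?thesis
    unfolding prod_odd_weights beta_fps_eq[OF assms exponent] by (rule sym)
qed

end
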